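(* Let $X$ be a topological space and $(Y,d)$ a metric space. For $f\in C(X,Y)$ and $\epsilon\in LSC(X,(0,1))$ put $B(f,\epsilon)=\{g\in C(X,Y): d(f(x),g(x))<\epsilon(x)\text{ for all }x\in X\}$. Then the family of all sets $B(f,\epsilon)$ with $f\in C(X,Y)$ and $\epsilon\in LSC(X,(0,1))$ is a base for the graph topology $\tau_\Gamma$ on $C(X,Y)$.
   Context: For topological spaces $X,Y$, $C(X,Y)$ denotes the set of continuous maps $X\to Y$; each $f\in C(X,Y)$ is identified with its graph $\{(x,f(x)):x\in X\}\subset X\times Y$. For $G$ open in $X\times Y$ let $F_G=\{f\in C(X,Y): f\subset G\}$. The graph topology $\tau_\Gamma$ on $C(X,Y)$ is the topology having the sets $F_G$ ($G$ open in $X\times Y$) as a base. $LSC(X,(0,1))$ denotes the set of all lower semicontinuous functions $X\to(0,1)$. *)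

theory Defs
  imports "HOL-Analysis.Analysis"
begin

text \<open>C(X,Y): continuous maps X to Y (X, Y given by their type topologies).\<close>
definition Cmaps :: "('a::topological_space \<Rightarrow> 'b::topological_space) set" where
  "Cmaps = {f. continuous_on UNIV f}"

definition FG :: "('a::topological_space \<times> 'b::topological_space) set \<Rightarrow> ('a \<Rightarrow> 'b) set" where
  "FG G = {f \<in> Cmaps. \<forall>x. (x, f x) \<in> G}"

definition graph_topology :: "('a::topological_space \<Rightarrow> 'b::topological_space) topology" where
  "graph_topology = topology (arbitrary union_of (\<lambda>U. \<exists>G. open G \<and> U = FG G))"

definition lsc :: "('a::topological_space \<Rightarrow> real) \<Rightarrow> bool" where
  "lsc e \<longleftrightarrow> (\<forall>t. open {x. t < e x})"

definition LSC01 :: "('a::topological_space \<Rightarrow> real) set" where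
  "LSC01 = {e. lsc e \<and> (\<forall>x. 0 < e x \<and> e x < 1)}"

definition Bfe :: "('a::topological_space \<Rightarrow> 'b::metric_space) \<Rightarrow> ('a \<Rightarrow> real) \<Rightarrow> ('a \<Rightarrow> 'b) set" where
  "Bfe f e = {g \<in> Cmaps. \<forall>x. dist (f x) (g x) < e x}"

end

theory Submission
  imports Defs
begin

(*
  (1) every ball B(f,\<epsilon>) is open in the graph topology: it equals F_G for the "tube"
      G = {(x,y). d(f x, y) < \<epsilon> x}, which is open in X \<times> Y because f is continuous
      and \<epsilon> is lower semicontinuous;
  (2) if f \<in> F_G with G open, some ball B(f,\<epsilon>) lies inside F_G.  For \<epsilon>(x) we take
      the supremum of the radii r \<le> 1/2 that are admissible near x, i.e. such that
      every point (z,y) with z close to x and d(f z, y) < r lies in G.  Admissibility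
      of r at x passes to all points near x, and such suprema are always lower
      semicontinuous.
*)

lemma FG_Int: "FG G \<inter> FG H = FG (G \<inter> H)"
  by (auto simp: FG_def)

text \<open>The sets F_G are closed under finite intersections, so their unions are exactly
  the open sets of the graph topology.\<close>
lemma openin_graph_topology:
  "openin (graph_topology :: ('a::topological_space \<Rightarrow> 'b::topological_space) topology)
     = arbitrary union_of (\<lambda>U. \<exists>G. open G \<and> U = FG G)"
proof -
  have "istopology (arbitrary union_of (\<lambda>U::('a \<Rightarrow> 'b) set. \<exists>G. open G \<and> U = FG G))"
    by (rule istopology_base) (metis FG_Int open_Int)
  then show ?thesis
    unfolding graph_topology_def by (simp add: topology_inverse')
qed

definition tube :: "('a \<Rightarrow> 'b::metric_space) \<Rightarrow> ('a \<Rightarrow> real) \<Rightarrow> ('a \<times> 'b) set" where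
  "tube f e = {p. dist (f (fst p)) (snd p) < e (fst p)}"

lemma Bfe_eq_FG_tube: "Bfe f e = FG (tube f e)"
  by (auto simp: Bfe_def FG_def tube_def)

text \<open>Around a point (x0,y0) of the tube with slack r, the box where e has dropped by
  less than r/3, f has moved by less than r/3 and y is within r/3 of y0 stays inside.\<close>
lemma open_tube:
  fixes f :: "'a::topological_space \<Rightarrow> 'b::metric_space"
  assumes f: "continuous_on UNIV f" and e: "lsc e"
  shows "open (tube f e)"
proof (rule open_prod_intro)
  fix p assume "p \<in> tube f e"
  then obtain x0 y0 where p: "p = (x0, y0)" and d: "dist (f x0) y0 < e x0"
    by (cases p) (auto simp: tube_def)
  define r where "r = e x0 - dist (f x0) y0"
  have r: "r > 0" using d r_def by simp
  define U where "U = {x. e x0 - r/3 < e x} \<inter> f -` ball (f x0) (r/3)"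
  have "open {x. e x0 - r/3 < e x}" using e by (simp add: lsc_def)
  moreover have "open (f -` ball (f x0) (r/3))"
    using f by (simp add: continuous_on_open_vimage)
  ultimately have "open U" unfolding U_def by auto
  moreover have "x0 \<in> U" using r by (simp add: U_def)
  moreover have "U \<times> ball y0 (r/3) \<subseteq> tube f e"
  proof clarify
    fix x y assume "x \<in> U" "y \<in> ball y0 (r/3)"
    then have close: "e x0 - r/3 < e x" "dist (f x) (f x0) < r/3" "dist y0 y < r/3"
      by (auto simp: U_def dist_commute)
    have "dist (f x) y \<le> dist (f x) (f x0) + dist (f x0) y"
      and "dist (f x0) y \<le> dist (f x0) y0 + dist y0 y"
      by (rule dist_triangle)+
    then have "dist (f x) y < e x" using close r_def by linarith
    then show "(x, y) \<in> tube f e" by (simp add: tube_def)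
  qed
  ultimately show "\<exists>A B. open A \<and> open B \<and> p \<in> A \<times> B \<and> A \<times> B \<subseteq> tube f e"
    using r p by (intro exI[of _ U] exI[of _ "ball y0 (r/3)"]) auto
qed

lemma lsc_Sup:
  fixes S :: "'a::topological_space \<Rightarrow> real set"
  assumes ne: "\<And>x. S x \<noteq> {}" and bdd: "\<And>x. bdd_above (S x)"
    and inherit: "\<And>x r. r \<in> S x \<Longrightarrow> \<exists>U. open U \<and> x \<in> U \<and> (\<forall>z\<in>U. r \<in> S z)"
  shows "lsc (\<lambda>x. Sup (S x))"
  unfolding lsc_def
proof
  fix t
  show "open {x. t < Sup (S x)}"
  proof (subst open_subopen, intro ballI)
    fix x assume "x \<in> {x. t < Sup (S x)}"
    then obtain r where r: "r \<in> S x" "t < r"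
      using less_cSup_iff[OF ne bdd] by auto
    then obtain U where U: "open U" "x \<in> U" "\<forall>z\<in>U. r \<in> S z"
      using inherit by blast
    have "t < Sup (S z)" if "z \<in> U" for z
    proof -
      have "r \<in> S z" using U(3) that by blast
      then show ?thesis using r(2) less_cSup_iff[OF ne bdd] by blast
    qed
    then have "U \<subseteq> {x. t < Sup (S x)}" by blast
    then show "\<exists>T. open T \<and> x \<in> T \<and> T \<subseteq> {x. t < Sup (S x)}" using U by blast
  qed
qed

definition admissible_radii ::
    "('a::topological_space \<Rightarrow> 'b::metric_space) \<Rightarrow> ('a \<times> 'b) set \<Rightarrow> 'a \<Rightarrow> real set" where
  "admissible_radii f G x = {r. 0 < r \<and> r \<le> 1/2 \<and> (\<exists>U. open U \<and> x \<in> U \<and>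
      (\<forall>z\<in>U. \<forall>y. dist (f z) y < r \<longrightarrow> (z, y) \<in> G))}"

text \<open>If the graph of a continuous f passes through the open set G at x, some radius is
  admissible at x: choose a box A \<times> ball (f x) s in G and let z range over the points of
  A that f maps into ball (f x) (s/2).\<close>
lemma admissible_radii_nonempty:
  fixes f :: "'a::topological_space \<Rightarrow> 'b::metric_space"
  assumes G: "open G" and f: "continuous_on UNIV f" and x: "(x, f x) \<in> G"
  shows "admissible_radii f G x \<noteq> {}"
proof -
  obtain A B where AB: "open A" "open B" "(x, f x) \<in> A \<times> B" "A \<times> B \<subseteq> G"
    by (rule open_prod_elim[OF G x])
  obtain s where s: "s > 0" "ball (f x) s \<subseteq> B"
    using open_contains_ball_eq[OF AB(2)] AB(3) by blast
  define r where "r = min (s/2) (1/2)"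
  define U where "U = A \<inter> f -` ball (f x) r"
  have "open U" unfolding U_def using AB(1) f
    by (simp add: continuous_on_open_vimage open_Int)
  moreover have "x \<in> U" using AB(3) s(1) by (simp add: U_def r_def)
  moreover have "\<forall>z\<in>U. \<forall>y. dist (f z) y < r \<longrightarrow> (z, y) \<in> G"
  proof (intro ballI allI impI)
    fix z y assume z: "z \<in> U" and d: "dist (f z) y < r"
    have "dist (f x) (f z) < r" using z by (simp add: U_def)
    then have "dist (f x) y < s" using d dist_triangle[of "f x" y "f z"] r_def by linarith
    then have "y \<in> B" using s(2) by auto
    moreover have "z \<in> A" using z by (simp add: U_def)
    ultimately show "(z, y) \<in> G" using AB(4) by blast
  qed
  ultimately have "r \<in> admissible_radii f G x"
    unfolding admissible_radii_def using s(1) r_def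
    by (intro CollectI conjI exI[of _ U]) auto
  then show ?thesis by blast
qed

lemma admissible_radii_inherit:
  assumes "r \<in> admissible_radii f G x"
  shows "\<exists>U. open U \<and> x \<in> U \<and> (\<forall>z\<in>U. r \<in> admissible_radii f G z)"
proof -
  obtain U where U: "open U" "x \<in> U" "\<forall>z\<in>U. \<forall>y. dist (f z) y < r \<longrightarrow> (z, y) \<in> G"
    and r: "0 < r" "r \<le> 1/2"
    using assms by (auto simp: admissible_radii_def)
  have "r \<in> admissible_radii f G z" if "z \<in> U" for z
    unfolding admissible_radii_def using U r that
    by (intro CollectI conjI exI[of _ U]) auto
  then show ?thesis using U by blast
qed

text \<open>With e x the supremum of the radii admissible at x, the ball B(f,e) lies in F_G:
  d(f z, g z) < e z means some radius admissible at z exceeds d(f z, g z).\<close>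
lemma ball_inside_FG:
  fixes f :: "'a::topological_space \<Rightarrow> 'b::metric_space"
  assumes G: "open G" and f: "f \<in> FG G"
  shows "\<exists>e \<in> LSC01. f \<in> Bfe f e \<and> Bfe f e \<subseteq> FG G"
proof -
  let ?R = "admissible_radii f G"
  define e where "e x = Sup (?R x)" for x
  have fc: "continuous_on UNIV f" using f by (simp add: FG_def Cmaps_def)
  have ne: "?R x \<noteq> {}" for x
    using admissible_radii_nonempty[OF G fc] f by (simp add: FG_def)
  have bdd: "bdd_above (?R x)" for x
    by (rule bdd_aboveI[of _ "1/2"]) (auto simp: admissible_radii_def)
  have less_e: "t < e x \<longleftrightarrow> (\<exists>r\<in>?R x. t < r)" for t x
    unfolding e_def by (rule less_cSup_iff[OF ne bdd])
  have "lsc e"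
    unfolding e_def by (rule lsc_Sup[OF ne bdd admissible_radii_inherit])
  moreover have "0 < e x" for x
    using ne[of x] less_e[of 0 x] by (auto simp: admissible_radii_def)
  moreover have "e x < 1" for x
  proof -
    have "e x \<le> 1/2"
      unfolding e_def by (rule cSup_least[OF ne]) (auto simp: admissible_radii_def)
    then show ?thesis by simp
  qed
  ultimately have "e \<in> LSC01" by (simp add: LSC01_def)
  moreover have "f \<in> Bfe f e" using f \<open>\<And>x. 0 < e x\<close> by (simp add: Bfe_def FG_def)
  moreover have "Bfe f e \<subseteq> FG G"
  proof
    fix g assume g: "g \<in> Bfe f e"
    have "(z, g z) \<in> G" for z
    proof -
      have "dist (f z) (g z) < e z" using g by (simp add: Bfe_def)
      then obtain r where "r \<in> ?R z" "dist (f z) (g z) < r"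
        using less_e by blast
      then show ?thesis by (auto simp: admissible_radii_def)
    qed
    then show "g \<in> FG G" using g by (simp add: Bfe_def FG_def)
  qed
  ultimately show ?thesis by blast
qed

theorem lemma1p1:
  shows "openin (graph_topology :: ('a::topological_space \<Rightarrow> 'b::metric_space) topology)
           = arbitrary union_of (\<lambda>U. \<exists>f e. f \<in> Cmaps \<and> e \<in> LSC01 \<and> U = Bfe f e)"
  unfolding openin_topology_base_unique
proof (intro conjI allI impI)
  fix V :: "('a \<Rightarrow> 'b) set"
  assume "\<exists>f e. f \<in> Cmaps \<and> e \<in> LSC01 \<and> V = Bfe f e"
  then obtain f e where "f \<in> Cmaps" "e \<in> LSC01" "V = FG (tube f e)"
    by (auto simp: Bfe_eq_FG_tube)
  then have "\<exists>G. open G \<and> V = FG G"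
    using open_tube by (auto simp: Cmaps_def LSC01_def)
  then show "openin graph_topology V"
    by (simp add: openin_graph_topology arbitrary_union_of_inc)
next
  fix U :: "('a \<Rightarrow> 'b) set" and f
  assume "openin graph_topology U \<and> f \<in> U"
  then obtain G where G: "open G" "f \<in> FG G" "FG G \<subseteq> U"
    unfolding openin_graph_topology arbitrary_union_of_alt by blast
  then obtain e where "e \<in> LSC01" "f \<in> Bfe f e" "Bfe f e \<subseteq> FG G"
    using ball_inside_FG by blast
  moreover have "f \<in> Cmaps" using G by (simp add: FG_def)
  ultimately show "\<exists>V. (\<exists>f e. f \<in> Cmaps \<and> e \<in> LSC01 \<and> V = Bfe f e) \<and> f \<in> V \<and> V \<subseteq> U"
    using G by blast
qed

end
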